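(* Let $\{x_i\}_{i\in[N]}$ be the global solution of the delayed consensus system described in the context, let $\beta>0$ and \[ F(t):=d_x(t)+\beta\int_{\max\{0,t-2\tau\}}^t e^{-(t-s)}\int_s^t\max_{i\in[N]}|\dot x_i(r)|\,\mathrm dr\,\mathrm ds,\qquad t\ge0. \] Then for all $i,j\in[N]$ and $t\ge2\tau$, \[ |x_j(t-\tau)-x_i(t-\sigma)|\le d_x(t-\tau)+\int_{t-\tau}^{t-\sigma}d_x(s-\tau)\,\mathrm ds+\beta^{-1}e^{2\tau}F(t-\sigma). \]
   Context: Let $N\ge2$, $d\ge1$ be integers, $[N]=\{1,\dots,N\}$, $0\le\sigma\le\tau$. Let $\psi:[0,\infty)\to[0,\infty)$ be continuous, nonincreasing, positive everywhere, with $\sup\psi\le1$. Given $x_i^0\in C([-\tau,0],\mathbb{R}^d)$, $\{x_i\}$ is the global solution (continuous on $[-\tau,\infty)$, continuously differentiable on $[0,\infty)$) of $\dot x_i(t)=\sum_{j\ne i}a_{ij}(t)(x_j(t-\tau)-x_i(t-\sigma))$ for $t>0$, with $a_{ij}(t)=\frac1{N-1}\psi(|x_i(t-\sigma)-x_j(t-\tau)|)$, and $x_i=x_i^0$ on $[-\tau,0]$. $d_x(t):=\max_{i,j\in[N]}|x_i(t)-x_j(t)|$. *)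

theory Defs
  imports "HOL-Analysis.Analysis"
begin

definition diam_x :: "nat \<Rightarrow> (nat \<Rightarrow> real \<Rightarrow> 'a::real_normed_vector) \<Rightarrow> real \<Rightarrow> real" where
  "diam_x N x t = Max {norm (x i t - x j t) | i j. i \<in> {1..N} \<and> j \<in> {1..N}}"

definition max_speed :: "nat \<Rightarrow> (nat \<Rightarrow> real \<Rightarrow> 'a::real_normed_vector) \<Rightarrow> real \<Rightarrow> real" where
  "max_speed N x' r = Max ((\<lambda>i. norm (x' i r)) ` {1..N})"

definition lyap_F :: "nat \<Rightarrow> real \<Rightarrow> real \<Rightarrow> (nat \<Rightarrow> real \<Rightarrow> 'a::real_normed_vector)
    \<Rightarrow> (nat \<Rightarrow> real \<Rightarrow> 'a) \<Rightarrow> real \<Rightarrow> real" where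
  "lyap_F N \<tau> \<beta> x x' t = diam_x N x t +
     \<beta> * integral {max 0 (t - 2 * \<tau>)..t}
           (\<lambda>s. exp (-(t - s)) * integral {s..t} (\<lambda>r. max_speed N x' r))"

end

theory Submission
  imports Defs
begin

text \<open>Split \<open>x j (t - \<tau>) - x i (t - \<sigma>)\<close> at \<open>x i (t - \<tau>)\<close>: the first part is at most
  \<open>d\<^sub>x(t - \<tau>)\<close>, the second at most the integral of the maximal speed \<open>M\<close> over \<open>[t - \<tau>, t - \<sigma>]\<close>.
  By the equation of motion, \<open>M(s)\<close> is an average of \<open>N - 1\<close> delayed relative positions
  \<open>x l (s - \<tau>) - x k (s - \<sigma>)\<close> with weights at most one, and each of these is bounded in the same
  way, by \<open>d\<^sub>x(s - \<tau>)\<close> plus the integral of \<open>M\<close> over \<open>[s - \<tau>, t - \<sigma>]\<close>. Integrating over \<open>s\<close>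
  and shifting by \<open>\<tau>\<close> leaves the integral over \<open>u \<in> [t - 2\<tau>, t - \<sigma> - \<tau>]\<close> of the tails
  \<open>H(u) = \<integral> M\<close> over \<open>[u, t - \<sigma>]\<close>. Since \<open>t - \<sigma> - u \<le> 2\<tau>\<close> there,
  \<open>H(u) \<le> exp (2\<tau>) * exp (-(t - \<sigma> - u)) * H(u)\<close>, and \<open>exp (-(t - \<sigma> - u)) * H(u)\<close> is the integrand of \<open>F(t - \<sigma>)\<close>.\<close>

lemma continuous_on_Max_image:
  fixes f :: "'i \<Rightarrow> 'a::topological_space \<Rightarrow> 'b::linorder_topology"
  assumes "finite I" "I \<noteq> {}" "\<And>i. i \<in> I \<Longrightarrow> continuous_on S (f i)"
  shows "continuous_on S (\<lambda>r. Max ((\<lambda>i. f i r) ` I))"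
  using assms
proof (induction I rule: finite_ne_induct)
  case (singleton i)
  then show ?case by simp
next
  case (insert i I)
  then show ?case
    by (simp add: Max_insert continuous_on_max)
qed

lemma norm_diff_le_integral_derivative_bound:
  fixes f f' :: "real \<Rightarrow> 'a::banach"
  assumes "a \<le> b"
    and "\<And>t. t \<in> {a..b} \<Longrightarrow> (f has_vector_derivative f' t) (at t within {a..b})"
    and "g integrable_on {a..b}"
    and "\<And>t. t \<in> {a..b} \<Longrightarrow> norm (f' t) \<le> g t"
  shows "norm (f b - f a) \<le> integral {a..b} g"
proof -
  have "(f' has_integral (f b - f a)) {a..b}"
    using assms(1,2) by (rule fundamental_theorem_of_calculus)
  then show ?thesis
    using integral_norm_bound_integral[of f' "{a..b}" g] assms(3,4)
    by (auto simp: integral_unique)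
qed

lemma norm_sum_weighted_average_le:
  fixes v :: "'i \<Rightarrow> 'a::real_normed_vector"
  assumes "finite J" "J \<noteq> {}"
    and "\<And>j. j \<in> J \<Longrightarrow> 0 \<le> w j \<and> w j \<le> 1"
    and "\<And>j. j \<in> J \<Longrightarrow> norm (v j) \<le> B"
  shows "norm (\<Sum>j\<in>J. (w j / real (card J)) *\<^sub>R v j) \<le> B"
proof -
  have card_pos: "0 < real (card J)"
    using assms(1,2) by (simp add: card_gt_0_iff)
  have "norm (\<Sum>j\<in>J. (w j / real (card J)) *\<^sub>R v j) \<le> (\<Sum>j\<in>J. B / real (card J))"
  proof (rule order_trans[OF norm_sum sum_mono])
    fix j assume "j \<in> J"
    then have "w j * norm (v j) \<le> 1 * B"
      using assms(3,4) by (intro mult_mono) (auto intro: order_trans[OF norm_ge_zero])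
    then show "norm ((w j / real (card J)) *\<^sub>R v j) \<le> B / real (card J)"
      using card_pos assms(3)[OF \<open>j \<in> J\<close>] by (simp add: divide_right_mono)
  qed
  also have "\<dots> = B"
    using card_pos by simp
  finally show ?thesis .
qed

lemma integral_tail_le_exp_weighted:
  fixes m :: "real \<Rightarrow> real"
  assumes m_int: "m integrable_on {a..T}" and m_nonneg: "\<And>r. r \<in> {a..T} \<Longrightarrow> 0 \<le> m r"
    and cd: "a \<le> c" "T - w \<le> c" "c \<le> d" "d \<le> T"
  shows "integral {c..d} (\<lambda>u. integral {u..T} m)
           \<le> exp w * integral {a..T} (\<lambda>s. exp (-(T - s)) * integral {s..T} m)"
proof -
  define H where "H u = integral {u..T} m" for u
  define g where "g s = exp (-(T - s)) * H s" for s
  have H_cont: "continuous_on {a..T} H"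
    unfolding H_def using m_int by (rule indefinite_integral_continuous_1')
  have H_nonneg: "0 \<le> H u" if "u \<in> {a..T}" for u
    unfolding H_def using that m_nonneg
    by (intro integral_nonneg integrable_on_subinterval[OF m_int]) auto
  have g_cont: "continuous_on {a..T} g"
    unfolding g_def by (intro continuous_intros H_cont)
  have g_nonneg: "0 \<le> g s" if "s \<in> {a..T}" for s
    unfolding g_def using H_nonneg[OF that] by simp
  have "integral {c..d} H \<le> integral {c..d} (\<lambda>u. exp w * g u)"
  proof (intro integral_le integrable_continuous_interval continuous_on_mult continuous_on_const
      continuous_on_subset[OF H_cont] continuous_on_subset[OF g_cont])
    fix u assume u: "u \<in> {c..d}"
    have "H u = exp (T - u) * g u"
      unfolding g_def by (simp flip: exp_add)
    also have "\<dots> \<le> exp w * g u"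
      using u cd g_nonneg[of u] by (intro mult_right_mono) auto
    finally show "H u \<le> exp w * g u" .
  qed (use cd in auto)
  also have "\<dots> \<le> exp w * integral {a..T} g"
    using cd g_nonneg
    by (auto intro!: integral_subset_le integrable_continuous_interval continuous_on_subset[OF g_cont])
  finally show ?thesis
    unfolding H_def g_def .
qed

lemma diam_x_eq_Max_pairs:
  "diam_x N x t = Max ((\<lambda>(i, j). norm (x i t - x j t)) ` ({1..N} \<times> {1..N}))"
  unfolding diam_x_def by (rule arg_cong[where f = Max]) force

lemma norm_le_diam_x:
  assumes "i \<in> {1..N}" "j \<in> {1..N}"
  shows "norm (x i t - x j t) \<le> diam_x N x t"
  unfolding diam_x_eq_Max_pairs using assms by (intro Max_ge) force+

lemma diam_x_nonneg: "1 \<le> N \<Longrightarrow> 0 \<le> diam_x N x t"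
  using norm_le_diam_x[of 1 N 1 x t] by simp

lemma continuous_on_diam_x:
  assumes "1 \<le> N" "\<And>i. i \<in> {1..N} \<Longrightarrow> continuous_on S (x i)"
  shows "continuous_on S (diam_x N x)"
proof -
  have "continuous_on S (\<lambda>t. Max ((\<lambda>p. norm (x (fst p) t - x (snd p) t)) ` ({1..N} \<times> {1..N})))"
    using assms by (intro continuous_on_Max_image continuous_intros) auto
  then show ?thesis
    unfolding diam_x_eq_Max_pairs case_prod_beta .
qed

lemma norm_le_max_speed: "i \<in> {1..N} \<Longrightarrow> norm (x' i t) \<le> max_speed N x' t"
  unfolding max_speed_def by (intro Max_ge) auto

lemma max_speed_attained:
  assumes "1 \<le> N"
  obtains k where "k \<in> {1..N}" "max_speed N x' t = norm (x' k t)"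
proof -
  have "max_speed N x' t \<in> (\<lambda>i. norm (x' i t)) ` {1..N}"
    unfolding max_speed_def using assms by (intro Max_in) auto
  then show ?thesis
    using that by blast
qed

lemma max_speed_nonneg: "1 \<le> N \<Longrightarrow> 0 \<le> max_speed N x' t"
  using norm_le_max_speed[of 1 N x' t] by (simp add: order_trans[OF norm_ge_zero])

lemma continuous_on_max_speed:
  assumes "1 \<le> N" "\<And>i. i \<in> {1..N} \<Longrightarrow> continuous_on S (x' i)"
  shows "continuous_on S (max_speed N x')"
  unfolding max_speed_def using assms
  by (intro continuous_on_Max_image continuous_intros) auto

text \<open>Of the hypotheses on \<open>\<psi>\<close> only \<open>0 \<le> \<psi> \<le> 1\<close> enters the estimate.\<close>

locale delayed_consensus =
  fixes N :: nat and \<sigma> \<tau> :: real and \<psi> :: "real \<Rightarrow> real"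
    and x x' :: "nat \<Rightarrow> real \<Rightarrow> 'a::banach"
  assumes N_ge_2: "2 \<le> N"
    and sigma_nonneg: "0 \<le> \<sigma>" and sigma_le_tau: "\<sigma> \<le> \<tau>"
    and psi_nonneg: "\<And>r. 0 \<le> r \<Longrightarrow> 0 \<le> \<psi> r"
    and psi_le_1: "\<And>r. 0 \<le> r \<Longrightarrow> \<psi> r \<le> 1"
    and x_cont: "\<And>i. i \<in> {1..N} \<Longrightarrow> continuous_on {-\<tau>..} (x i)"
    and x_deriv: "\<And>i t. i \<in> {1..N} \<Longrightarrow> 0 \<le> t \<Longrightarrow>
                    (x i has_vector_derivative x' i t) (at t within {0..})"
    and x'_cont: "\<And>i. i \<in> {1..N} \<Longrightarrow> continuous_on {0..} (x' i)"
    and ode: "\<And>i t. i \<in> {1..N} \<Longrightarrow> 0 < t \<Longrightarrow>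
               x' i t = (\<Sum>j\<in>{1..N} - {i}.
                 ((1 / (real N - 1)) * \<psi> (norm (x i (t - \<sigma>) - x j (t - \<tau>))))
                   *\<^sub>R (x j (t - \<tau>) - x i (t - \<sigma>)))"
begin

lemma max_speed_integrable: "0 \<le> a \<Longrightarrow> max_speed N x' integrable_on {a..b}"
  using N_ge_2 x'_cont
  by (intro integrable_continuous_interval continuous_on_subset[OF continuous_on_max_speed]) auto

lemma norm_diff_le_integral_max_speed:
  assumes "k \<in> {1..N}" "0 \<le> a" "a \<le> b"
  shows "norm (x k b - x k a) \<le> integral {a..b} (max_speed N x')"
  using assms
  by (intro norm_diff_le_integral_derivative_bound[where f' = "x' k"] max_speed_integrable
      norm_le_max_speed has_vector_derivative_within_subset[OF x_deriv]) auto

lemma delayed_gap_le: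
  assumes "l \<in> {1..N}" "k \<in> {1..N}" "\<tau> \<le> s"
  shows "norm (x l (s - \<tau>) - x k (s - \<sigma>))
           \<le> diam_x N x (s - \<tau>) + integral {s - \<tau>..s - \<sigma>} (max_speed N x')"
proof -
  have "norm (x l (s - \<tau>) - x k (s - \<sigma>))
          \<le> norm (x l (s - \<tau>) - x k (s - \<tau>)) + norm (x k (s - \<sigma>) - x k (s - \<tau>))"
    using norm_triangle_ineq4[of "x l (s - \<tau>) - x k (s - \<tau>)" "x k (s - \<sigma>) - x k (s - \<tau>)"]
    by simp
  also have "\<dots> \<le> diam_x N x (s - \<tau>) + integral {s - \<tau>..s - \<sigma>} (max_speed N x')"
    using assms sigma_le_tau
    by (intro add_mono norm_le_diam_x norm_diff_le_integral_max_speed) auto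
  finally show ?thesis .
qed

lemma max_speed_le_delayed:
  assumes "0 < s" "\<tau> \<le> s" "s - \<sigma> \<le> T"
  shows "max_speed N x' s \<le> diam_x N x (s - \<tau>) + integral {s - \<tau>..T} (max_speed N x')"
proof -
  obtain k where k: "k \<in> {1..N}" and speed_k: "max_speed N x' s = norm (x' k s)"
    using N_ge_2 max_speed_attained by (metis one_le_numeral order_trans)
  define B where "B = diam_x N x (s - \<tau>) + integral {s - \<tau>..T} (max_speed N x')"
  have "integral {s - \<tau>..s - \<sigma>} (max_speed N x') \<le> integral {s - \<tau>..T} (max_speed N x')"
    using assms sigma_le_tau N_ge_2
    by (intro integral_subset_le max_speed_integrable ballI max_speed_nonneg) auto
  then have gap_le_B: "norm (x l (s - \<tau>) - x k (s - \<sigma>)) \<le> B" if "l \<in> {1..N}" for l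
    unfolding B_def using delayed_gap_le[OF that k \<open>\<tau> \<le> s\<close>] by linarith
  have card_others: "real (card ({1..N} - {k})) = real N - 1"
    using k N_ge_2 by (simp add: of_nat_diff)
  have "(if k = 1 then 2 else 1) \<in> {1..N} - {k}"
    using N_ge_2 by auto
  then have others_nonempty: "{1..N} - {k} \<noteq> {}"
    by blast
  have "norm (\<Sum>l\<in>{1..N} - {k}. (\<psi> (norm (x k (s - \<sigma>) - x l (s - \<tau>))) / real (card ({1..N} - {k})))
                   *\<^sub>R (x l (s - \<tau>) - x k (s - \<sigma>))) \<le> B"
    using others_nonempty psi_nonneg psi_le_1 gap_le_B by (intro norm_sum_weighted_average_le) auto
  then have "norm (x' k s) \<le> B"
    unfolding ode[OF k \<open>0 < s\<close>] card_others by simp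
  then show ?thesis
    unfolding speed_k B_def .
qed

lemma integral_max_speed_le:
  assumes "2 * \<tau> \<le> t"
  shows "integral {t - \<tau>..t - \<sigma>} (max_speed N x')
           \<le> integral {t - \<tau>..t - \<sigma>} (\<lambda>s. diam_x N x (s - \<tau>))
              + integral {t - 2 * \<tau>..t - \<sigma> - \<tau>} (\<lambda>u. integral {u..t - \<sigma>} (max_speed N x'))"
proof (cases "\<tau> = 0")
  case True
  then show ?thesis
    using sigma_nonneg sigma_le_tau by simp
next
  case False
  then have tau_pos: "0 < \<tau>"
    using sigma_nonneg sigma_le_tau by simp
  define H where "H u = integral {u..t - \<sigma>} (max_speed N x')" for u
  have D_int: "(\<lambda>s. diam_x N x (s - \<tau>)) integrable_on {t - \<tau>..t - \<sigma>}"
    using N_ge_2 x_cont assms tau_pos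
    by (intro integrable_continuous_interval continuous_on_compose2[OF continuous_on_diam_x])
      (auto intro!: continuous_intros)
  have H_int: "(\<lambda>s. H (s - \<tau>)) integrable_on {t - \<tau>..t - \<sigma>}"
    unfolding H_def using assms tau_pos
    by (intro integrable_continuous_interval continuous_on_compose2[OF indefinite_integral_continuous_1'
          [OF max_speed_integrable[of 0]]])
      (auto intro!: continuous_intros)
  have "integral {t - \<tau>..t - \<sigma>} (max_speed N x')
          \<le> integral {t - \<tau>..t - \<sigma>} (\<lambda>s. diam_x N x (s - \<tau>) + H (s - \<tau>))"
    using assms tau_pos sigma_nonneg D_int H_int
    by (intro integral_le max_speed_integrable integrable_add)
      (auto simp: H_def intro!: max_speed_le_delayed)
  also have "\<dots> = integral {t - \<tau>..t - \<sigma>} (\<lambda>s. diam_x N x (s - \<tau>))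
                   + integral {t - 2 * \<tau>..t - \<sigma> - \<tau>} H"
    using D_int H_int
      integral_shift_real_ivl[where f = H and a = "t - 2 * \<tau>" and b = "t - \<sigma> - \<tau>" and c = "-\<tau>"]
    by (simp add: integral_add)
  finally show ?thesis
    unfolding H_def .
qed

lemma integral_tail_max_speed_le_lyap_F:
  assumes "0 < \<beta>" "max 0 (T - 2 * \<tau>) \<le> c" "c \<le> d" "d \<le> T"
  shows "integral {c..d} (\<lambda>u. integral {u..T} (max_speed N x'))
           \<le> exp (2 * \<tau>) / \<beta> * lyap_F N \<tau> \<beta> x x' T"
proof -
  let ?I = "integral {max 0 (T - 2 * \<tau>)..T}
              (\<lambda>s. exp (-(T - s)) * integral {s..T} (max_speed N x'))"
  have "integral {c..d} (\<lambda>u. integral {u..T} (max_speed N x')) \<le> exp (2 * \<tau>) * ?I"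
    using assms N_ge_2
    by (intro integral_tail_le_exp_weighted max_speed_integrable max_speed_nonneg) auto
  also have "\<dots> \<le> exp (2 * \<tau>) / \<beta> * diam_x N x T + exp (2 * \<tau>) * ?I"
    using assms(1) N_ge_2 diam_x_nonneg[of N x T] by simp
  also have "\<dots> = exp (2 * \<tau>) / \<beta> * lyap_F N \<tau> \<beta> x x' T"
    unfolding lyap_F_def using assms(1) by (simp add: field_simps)
  finally show ?thesis .
qed

end

theorem lemma3p5:
  fixes N :: nat and \<sigma> \<tau> \<beta> :: real and \<psi> :: "real \<Rightarrow> real"
    and x x' :: "nat \<Rightarrow> real \<Rightarrow> real ^ 'd"
  assumes N2: "N \<ge> 2"
    and sig: "0 \<le> \<sigma>" "\<sigma> \<le> \<tau>"
    and psi_cont: "continuous_on {0..} \<psi>"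
    and psi_mono: "\<And>a b. 0 \<le> a \<Longrightarrow> a \<le> b \<Longrightarrow> \<psi> b \<le> \<psi> a"
    and psi_pos: "\<And>r. 0 \<le> r \<Longrightarrow> \<psi> r > 0"
    and psi_le1: "\<And>r. 0 \<le> r \<Longrightarrow> \<psi> r \<le> 1"
    and x_cont: "\<And>i. i \<in> {1..N} \<Longrightarrow> continuous_on {-\<tau>..} (x i)"
    and x_deriv: "\<And>i t. i \<in> {1..N} \<Longrightarrow> 0 \<le> t \<Longrightarrow>
                    (x i has_vector_derivative x' i t) (at t within {0..})"
    and x'_cont: "\<And>i. i \<in> {1..N} \<Longrightarrow> continuous_on {0..} (x' i)"
    and ode: "\<And>i t. i \<in> {1..N} \<Longrightarrow> 0 < t \<Longrightarrow>
               x' i t = (\<Sum>j\<in>{1..N} - {i}.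
                 ((1 / (real N - 1)) * \<psi> (norm (x i (t - \<sigma>) - x j (t - \<tau>))))
                   *\<^sub>R (x j (t - \<tau>) - x i (t - \<sigma>)))"
    and beta: "\<beta> > 0"
    and ij: "i \<in> {1..N}" "j \<in> {1..N}"
    and t: "t \<ge> 2 * \<tau>"
  shows "norm (x j (t - \<tau>) - x i (t - \<sigma>))
           \<le> diam_x N x (t - \<tau>) + integral {t - \<tau>..t - \<sigma>} (\<lambda>s. diam_x N x (s - \<tau>))
              + exp (2 * \<tau>) / \<beta> * lyap_F N \<tau> \<beta> x x' (t - \<sigma>)"
proof -
  interpret delayed_consensus N \<sigma> \<tau> \<psi> x x'
    using N2 sig psi_pos psi_le1 x_cont x_deriv x'_cont ode
    by unfold_locales (auto intro: less_imp_le)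
  have "norm (x j (t - \<tau>) - x i (t - \<sigma>))
          \<le> diam_x N x (t - \<tau>) + integral {t - \<tau>..t - \<sigma>} (max_speed N x')"
    using ij sig t by (intro delayed_gap_le) auto
  also have "\<dots> \<le> diam_x N x (t - \<tau>) + integral {t - \<tau>..t - \<sigma>} (\<lambda>s. diam_x N x (s - \<tau>))
                   + integral {t - 2 * \<tau>..t - \<sigma> - \<tau>} (\<lambda>u. integral {u..t - \<sigma>} (max_speed N x'))"
    using integral_max_speed_le[OF t] by simp
  also have "\<dots> \<le> diam_x N x (t - \<tau>) + integral {t - \<tau>..t - \<sigma>} (\<lambda>s. diam_x N x (s - \<tau>))
                   + exp (2 * \<tau>) / \<beta> * lyap_F N \<tau> \<beta> x x' (t - \<sigma>)"
    using sig t by (intro add_left_mono integral_tail_max_speed_le_lyap_F[OF beta]) auto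
  finally show ?thesis .
qed

end
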